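(* There exists a universal constant $C>0$ such that the following holds. Let $0<\varepsilon<1$, $d,k,\lambda\in\mathbb{N}$, $t=\lceil C\varepsilon^{-2}(\lambda\log(2/\varepsilon)+\log(k+1))\rceil$, and let $G\in\mathbb{R}^{t\times d}$ be a Gaussian JL map. Then for every finite set $P\subset\mathbb{R}^d$ with $\operatorname{ddim}(P)=\lambda$, with probability at least $2/3$, for all $x_1,x_2\in P$, $$(1-\varepsilon)\|x_1-x_2\|-\varepsilon KC_k(P)\le\|Gx_1-Gx_2\|\le(1+\varepsilon)\|x_1-x_2\|+\varepsilon KC_k(P).$$
   Context: Norms are Euclidean. A Gaussian JL map is a random $t\times d$ matrix with i.i.d. $\mathcal{N}(0,1/t)$ entries. The doubling dimension $\operatorname{ddim}(X)$ of $X\subset\mathbb{R}^d$ is the smallest $\lambda$ such that for every ball $B$ of radius $r$, $X\cap B$ can be covered by $2^\lambda$ balls of radius $r/2$. $KC_k(P)$ is the optimal $k$-center radius: $KC_k(P)=\min_{S\subseteq P,|S|=k}\max_{x\in P}\min_{s\in S}\|x-s\|$. *)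

theory Defs
  imports "HOL-Probability.Probability"
begin

text \<open>Points of R^d are represented as functions nat => real vanishing outside {..<d}.\<close>

definition Rd :: "nat \<Rightarrow> (nat \<Rightarrow> real) set" where
  "Rd d = {x. \<forall>i\<ge>d. x i = 0}"

definition enorm :: "nat \<Rightarrow> (nat \<Rightarrow> real) \<Rightarrow> real" where
  "enorm d x = sqrt (\<Sum>i<d. (x i)\<^sup>2)"

definition edist :: "nat \<Rightarrow> (nat \<Rightarrow> real) \<Rightarrow> (nat \<Rightarrow> real) \<Rightarrow> real" where
  "edist d x y = enorm d (\<lambda>i. x i - y i)"

definition ecball :: "nat \<Rightarrow> (nat \<Rightarrow> real) \<Rightarrow> real \<Rightarrow> (nat \<Rightarrow> real) set" where
  "ecball d c r = {x \<in> Rd d. edist d c x \<le> r}"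

definition doubling_ok :: "nat \<Rightarrow> (nat \<Rightarrow> real) set \<Rightarrow> real \<Rightarrow> bool" where
  "doubling_ok d X lam \<longleftrightarrow>
     (\<forall>c \<in> Rd d. \<forall>r>0. \<exists>Cs. finite Cs \<and> Cs \<subseteq> Rd d \<and> real (card Cs) \<le> 2 powr lam \<and>
        X \<inter> ecball d c r \<subseteq> (\<Union>s\<in>Cs. ecball d s (r/2)))"

definition ddim :: "nat \<Rightarrow> (nat \<Rightarrow> real) set \<Rightarrow> real" where
  "ddim d X = Inf {lam. doubling_ok d X lam}"

definition KC :: "nat \<Rightarrow> nat \<Rightarrow> (nat \<Rightarrow> real) set \<Rightarrow> real" where
  "KC d k P = Min ((\<lambda>S. Max ((\<lambda>x. Min ((\<lambda>s. edist d x s) ` S)) ` P))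
                    ` {S. S \<subseteq> P \<and> S \<noteq> {} \<and> card S \<le> k})"

text \<open>Gaussian JL map: t x d matrix with i.i.d. N(0,1/t) entries (std. dev. 1/sqrt t).\<close>

definition gauss_JL :: "nat \<Rightarrow> nat \<Rightarrow> (nat \<times> nat \<Rightarrow> real) measure" where
  "gauss_JL t d = (\<Pi>\<^sub>M ij \<in> {..<t} \<times> {..<d}. density lborel (normal_density 0 (1 / sqrt (real t))))"

definition mat_apply :: "nat \<Rightarrow> nat \<Rightarrow> (nat \<times> nat \<Rightarrow> real) \<Rightarrow> (nat \<Rightarrow> real) \<Rightarrow> (nat \<Rightarrow> real)" where
  "mat_apply t d G x = (\<lambda>i. if i < t then (\<Sum>j<d. G (i, j) * x j) else 0)"

end

(* Each row of G maps a fixed vector v to a centred normal variable of variance |v|^2/t, and the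
   rows are independent, so t |Gv|^2 / |v|^2 is chi-square with t degrees of freedom; Chernoff's
   bound gives P(|Gv| > (1+u)|v|) and P(|Gv| < (1-u)|v|) at most exp(-t u^2/2).
   Let R = KC_k(P). Starting from k optimal centres, doubling dimension lam refines them into nets
   N_j of P at scale rho/2^j, where rho is about eps R/22, with |N_j| <= exp((j+7) L) for
   L = lam log(2/eps) + log(k+1). Since t >= 64 L/eps^2, a union bound shows that with probability
   at least 2/3 all pairs of N_0 are preserved up to 1 +- eps and every link between N_j and N_(j+1)
   is stretched by at most j + 2. Chaining each point of P down to N_0 then moves it by at most rho
   in R^d and 9 rho in R^t, an error absorbed by the additive term eps R. *)

theory Submission
  imports Defs
begin

abbreviation img_dist :: "nat \<Rightarrow> nat \<Rightarrow> (nat \<times> nat \<Rightarrow> real) \<Rightarrow> (nat \<Rightarrow> real) \<Rightarrow> (nat \<Rightarrow> real) \<Rightarrow> real" where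
  "img_dist t d G x y \<equiv> edist t (mat_apply t d G x) (mat_apply t d G y)"

lemma edist_eq_L2_set: "edist n x y = L2_set (\<lambda>i. x i - y i) {..<n}"
  unfolding edist_def enorm_def L2_set_def ..

lemma edist_commute: "edist n x y = edist n y x"
  unfolding edist_def enorm_def by (simp add: power2_commute)

lemma edist_self [simp]: "edist n x x = 0"
  unfolding edist_def enorm_def by simp

lemma edist_nonneg: "0 \<le> edist n x y"
  unfolding edist_def enorm_def by (simp add: sum_nonneg)

lemma edist_triangle: "edist n x z \<le> edist n x y + edist n y z"
proof -
  have "edist n x z = L2_set (\<lambda>i. (x i - y i) + (y i - z i)) {..<n}"
    unfolding edist_eq_L2_set by simp
  also have "\<dots> \<le> L2_set (\<lambda>i. x i - y i) {..<n} + L2_set (\<lambda>i. y i - z i) {..<n}"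
    by (rule L2_set_triangle_ineq)
  finally show ?thesis unfolding edist_eq_L2_set .
qed

lemma edist_quadrilateral: "edist n x1 x2 \<le> edist n a1 a2 + edist n x1 a1 + edist n x2 a2"
  using edist_triangle[of n x1 x2 a1] edist_triangle[of n a1 x2 a2] edist_commute[of n a2 x2]
  by linarith

lemma img_dist_eq:
  "img_dist t d G x y = sqrt (\<Sum>i<t. (\<Sum>j<d. G (i,j) * (x j - y j))\<^sup>2)"
  unfolding edist_def enorm_def mat_apply_def
  by (intro arg_cong[where f=sqrt] sum.cong) (auto simp: sum_subtractf right_diff_distrib)

lemma img_dist_eq_0:
  assumes "edist d x y = 0"
  shows "img_dist t d G x y = 0"
proof -
  have "(\<Sum>j<d. (x j - y j)\<^sup>2) = 0"
    using assms unfolding edist_def enorm_def by (simp add: sum_nonneg)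
  then have "\<And>j. j < d \<Longrightarrow> x j - y j = 0"
    by (subst (asm) sum_nonneg_eq_0_iff) auto
  then show ?thesis unfolding img_dist_eq by simp
qed

definition gauss_entry :: "nat \<Rightarrow> real measure" where
  "gauss_entry t = density lborel (normal_density 0 (1 / sqrt (real t)))"

lemma gauss_JL_eq_PiM: "gauss_JL t d = PiM ({..<t} \<times> {..<d}) (\<lambda>_. gauss_entry t)"
  unfolding gauss_JL_def gauss_entry_def by simp

lemma prob_space_gauss_entry: "0 < t \<Longrightarrow> prob_space (gauss_entry t)"
  unfolding gauss_entry_def by (rule prob_space_normal_density) simp

lemma prob_space_gauss_JL: "0 < t \<Longrightarrow> prob_space (gauss_JL t d)"
  unfolding gauss_JL_eq_PiM by (rule prob_space_PiM) (rule prob_space_gauss_entry)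

lemma sets_gauss_entry [simp]: "sets (gauss_entry t) = sets borel"
  unfolding gauss_entry_def by simp

lemma gauss_JL_entry_measurable:
  assumes "ij \<in> {..<t} \<times> {..<d}"
  shows "(\<lambda>G. G ij) \<in> borel_measurable (gauss_JL t d)"
proof -
  have "(\<lambda>G. G ij) \<in> measurable (gauss_JL t d) (gauss_entry t)"
    unfolding gauss_JL_eq_PiM by (rule measurable_component_singleton) (rule assms)
  then show ?thesis by (simp cong: measurable_cong_sets)
qed

lemma mat_apply_measurable [measurable]:
  "(\<lambda>G. mat_apply t d G x i) \<in> borel_measurable (gauss_JL t d)"
  unfolding mat_apply_def
  by (cases "i < t") (auto intro!: borel_measurable_sum borel_measurable_times gauss_JL_entry_measurable)

lemma img_dist_measurable [measurable]:
  "(\<lambda>G. img_dist t d G x y) \<in> borel_measurable (gauss_JL t d)"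
  unfolding edist_def enorm_def by measurable

lemma distr_gauss_JL_entry:
  assumes "0 < t" "ij \<in> {..<t} \<times> {..<d}"
  shows "distr (gauss_JL t d) borel (\<lambda>G. G ij) = gauss_entry t"
proof -
  have "distr (gauss_JL t d) borel (\<lambda>G. G ij) = distr (gauss_JL t d) (gauss_entry t) (\<lambda>G. G ij)"
    by (rule distr_cong) auto
  also have "\<dots> = gauss_entry t"
    unfolding gauss_JL_eq_PiM
    by (rule distr_PiM_component) (use assms prob_space_gauss_entry in auto)
  finally show ?thesis .
qed

lemma gauss_JL_entry_distributed:
  assumes "0 < t" "ij \<in> {..<t} \<times> {..<d}"
  shows "distributed (gauss_JL t d) lborel (\<lambda>G. G ij)
           (\<lambda>x. ennreal (normal_density 0 (1 / sqrt (real t)) x))"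
  using distr_gauss_JL_entry[OF assms] gauss_JL_entry_measurable[OF assms(2)]
  unfolding distributed_def gauss_entry_def by (simp cong: distr_cong)

lemma gauss_JL_entries_indep:
  assumes t: "0 < t"
  shows "prob_space.indep_vars (gauss_JL t d) (\<lambda>_. borel) (\<lambda>ij G. G ij) ({..<t} \<times> {..<d})"
proof -
  interpret prob_space "gauss_JL t d" by (rule prob_space_gauss_JL[OF t])
  let ?I = "{..<t} \<times> {..<d}"
  show ?thesis
  proof (cases "?I = {}")
    case True
    then show ?thesis unfolding indep_vars_def indep_sets_def by auto
  next
    case False
    have "distr (gauss_JL t d) (PiM ?I (\<lambda>_. borel)) (\<lambda>G. \<lambda>ij\<in>?I. G ij)
        = distr (gauss_JL t d) (gauss_JL t d) (\<lambda>G. G)"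
    proof (rule distr_cong)
      show "sets (PiM ?I (\<lambda>_. borel)) = sets (gauss_JL t d)"
        unfolding gauss_JL_eq_PiM by (rule sets_PiM_cong) simp_all
      fix G assume "G \<in> space (gauss_JL t d)"
      then show "restrict G ?I = G"
        unfolding gauss_JL_eq_PiM space_PiM by (rule PiE_restrict)
    qed simp
    also have "\<dots> = PiM ?I (\<lambda>ij. distr (gauss_JL t d) borel (\<lambda>G. G ij))"
      unfolding distr_id using distr_gauss_JL_entry[OF t]
      by (simp add: gauss_JL_eq_PiM cong: PiM_cong)
    finally show ?thesis
      using False gauss_JL_entry_measurable by (subst indep_vars_iff_distr_eq_PiM') auto
  qed
qed

lemma gauss_JL_row_distributed:
  assumes t: "0 < t" and i: "i < t" and v: "0 < (\<Sum>j<d. (v j)\<^sup>2)"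
  shows "distributed (gauss_JL t d) lborel (\<lambda>G. \<Sum>j<d. G (i,j) * v j)
           (\<lambda>x. ennreal (normal_density 0 (sqrt (\<Sum>j<d. (v j)\<^sup>2) / sqrt t) x))"
proof -
  interpret prob_space "gauss_JL t d" by (rule prob_space_gauss_JL[OF t])
  \<comment> \<open>sum_indep_normal needs positive variances, so the coordinates where v vanishes are dropped\<close>
  define J where "J = {j\<in>{..<d}. v j \<noteq> 0}"
  define K where "K = Pair i ` J"
  have "J \<noteq> {}"
    using v by (auto simp: J_def intro: ccontr)
  then have K: "finite K" "K \<noteq> {}" "K \<subseteq> {..<t} \<times> {..<d}"
    using i by (auto simp: K_def J_def)
  have indep: "indep_vars (\<lambda>_. borel) (\<lambda>ij G. G ij * v (snd ij)) K"
    using indep_vars_compose2[OF indep_vars_subset[OF gauss_JL_entries_indep[OF t] K(3)],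
        of "\<lambda>ij x. x * v (snd ij)" "\<lambda>_. borel"]
    by simp
  have distr: "distributed (gauss_JL t d) lborel (\<lambda>G. G ij * v (snd ij))
       (\<lambda>x. ennreal (normal_density 0 (\<bar>v (snd ij)\<bar> * (1 / sqrt t)) x))" if "ij \<in> K" for ij
  proof -
    obtain j where j: "ij = (i,j)" "j < d" "v j \<noteq> 0"
      using \<open>ij \<in> K\<close> by (auto simp: K_def J_def)
    have "distributed (gauss_JL t d) lborel (\<lambda>G. 0 + v j * G (i,j))
        (\<lambda>x. ennreal (normal_density (0 + v j * 0) (\<bar>v j\<bar> * (1 / sqrt t)) x))"
      using j t i by (intro normal_density_affine gauss_JL_entry_distributed) auto
    then show ?thesis using j by (simp add: mult.commute)
  qed
  have "distributed (gauss_JL t d) lborel (\<lambda>G. \<Sum>ij\<in>K. G ij * v (snd ij))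
     (\<lambda>x. ennreal (normal_density (\<Sum>ij\<in>K. 0) (sqrt (\<Sum>ij\<in>K. (\<bar>v (snd ij)\<bar> * (1 / sqrt t))\<^sup>2)) x))"
    using K indep distr t by (intro sum_indep_normal) (auto simp: K_def J_def)
  moreover have "(\<Sum>ij\<in>K. G ij * v (snd ij)) = (\<Sum>j<d. G (i,j) * v j)" for G :: "nat \<times> nat \<Rightarrow> real"
  proof -
    have "(\<Sum>ij\<in>K. G ij * v (snd ij)) = (\<Sum>j\<in>J. G (i,j) * v j)"
      unfolding K_def by (subst sum.reindex) (auto simp: inj_on_def)
    also have "\<dots> = (\<Sum>j<d. G (i,j) * v j)"
      by (rule sum.mono_neutral_left) (auto simp: J_def)
    finally show ?thesis .
  qed
  moreover have "(\<Sum>ij\<in>K. (\<bar>v (snd ij)\<bar> * (1 / sqrt t))\<^sup>2) = (\<Sum>j<d. (v j)\<^sup>2) / t"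
  proof -
    have "(\<Sum>ij\<in>K. (\<bar>v (snd ij)\<bar> * (1 / sqrt t))\<^sup>2) = (\<Sum>j\<in>J. (v j)\<^sup>2 / t)"
      unfolding K_def using t
      by (subst sum.reindex) (auto simp: inj_on_def power_mult_distrib power_divide)
    also have "\<dots> = (\<Sum>j<d. (v j)\<^sup>2 / t)"
      by (rule sum.mono_neutral_left) (auto simp: J_def)
    finally show ?thesis by (simp add: sum_divide_distrib)
  qed
  ultimately show ?thesis by (simp add: real_sqrt_divide)
qed

lemma gauss_JL_rows_indep:
  fixes f :: "nat \<Rightarrow> real \<Rightarrow> 'b::topological_space"
  assumes t: "0 < t" and f: "\<And>i. f i \<in> borel_measurable borel"
  shows "prob_space.indep_vars (gauss_JL t d) (\<lambda>_. borel) (\<lambda>i G. f i (\<Sum>j<d. G (i,j) * v j)) {..<t}"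
proof -
  interpret prob_space "gauss_JL t d" by (rule prob_space_gauss_JL[OF t])
  define K where "K i = {i} \<times> {..<d}" for i :: nat
  have rows: "indep_vars (\<lambda>i. PiM (K i) (\<lambda>_. borel)) (\<lambda>i G. restrict G (K i)) {..<t}"
    by (rule indep_vars_restrict[OF gauss_JL_entries_indep[OF t]])
      (auto simp: K_def disjoint_family_on_def)
  have "(\<lambda>r. f i (\<Sum>j<d. r (i,j) * v j)) \<in> borel_measurable (PiM (K i) (\<lambda>_. borel))" for i
    by (intro measurable_compose[OF _ f] borel_measurable_sum borel_measurable_times
        borel_measurable_const measurable_component_singleton) (auto simp: K_def)
  from indep_vars_compose2[OF rows this]
  have "indep_vars (\<lambda>_. borel) (\<lambda>i G. f i (\<Sum>j<d. restrict G (K i) (i,j) * v j)) {..<t}"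
    by simp
  moreover have "(\<lambda>G. f i (\<Sum>j<d. restrict G (K i) (i,j) * v j)) = (\<lambda>G. f i (\<Sum>j<d. G (i,j) * v j))" for i
    by (auto simp: K_def intro!: arg_cong[where f="f i"] sum.cong)
  ultimately show ?thesis by simp
qed

text \<open>Completing the square turns the integrand into a rescaled normal density.\<close>

lemma nn_integral_normal_density_exp_sq:
  assumes \<tau>: "0 < \<tau>" and c: "2 * c * \<tau>\<^sup>2 < 1"
  shows "(\<integral>\<^sup>+y. ennreal (normal_density 0 \<tau> y) * ennreal (exp (c * y\<^sup>2)) \<partial>lborel)
         = ennreal (1 / sqrt (1 - 2 * c * \<tau>\<^sup>2))"
proof -
  define q where "q = 1 - 2 * c * \<tau>\<^sup>2"
  define \<tau>' where "\<tau>' = \<tau> / sqrt q"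
  have q: "0 < q" using c by (simp add: q_def)
  have \<tau>': "0 < \<tau>'" using q \<tau> by (simp add: \<tau>'_def)
  have \<tau>'_sq: "\<tau>'\<^sup>2 = \<tau>\<^sup>2 / q" using q by (simp add: \<tau>'_def power_divide)
  have eq: "normal_density 0 \<tau> y * exp (c * y\<^sup>2) = (1 / sqrt q) * normal_density 0 \<tau>' y" for y
  proof -
    have "- (y - 0)\<^sup>2 / (2 * \<tau>\<^sup>2) + c * y\<^sup>2 = - (y - 0)\<^sup>2 / (2 * \<tau>'\<^sup>2)"
      using q \<tau> unfolding \<tau>'_sq q_def by (simp add: field_simps)
    moreover have "sqrt (2 * pi * \<tau>'\<^sup>2) = sqrt (2 * pi * \<tau>\<^sup>2) / sqrt q"
      unfolding \<tau>'_sq by (simp add: real_sqrt_divide real_sqrt_mult)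
    ultimately show ?thesis
      using q unfolding normal_density_def by (simp add: mult.assoc exp_add[symmetric])
  qed
  have "(\<integral>\<^sup>+y. ennreal (normal_density 0 \<tau> y) * ennreal (exp (c * y\<^sup>2)) \<partial>lborel)
      = (\<integral>\<^sup>+y. ennreal (1 / sqrt q) * ennreal (normal_density 0 \<tau>' y) \<partial>lborel)"
    by (intro nn_integral_cong) (simp add: ennreal_mult''[symmetric] eq q)
  also have "\<dots> = ennreal (1 / sqrt q) * (\<integral>\<^sup>+y. ennreal (normal_density 0 \<tau>' y) \<partial>lborel)"
    by (rule nn_integral_cmult) simp
  also have "(\<integral>\<^sup>+y. ennreal (normal_density 0 \<tau>' y) \<partial>lborel) = 1"
    using integrable_normal_density[OF \<tau>'] integral_normal_density[OF \<tau>']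
    by (subst nn_integral_eq_integral) auto
  finally show ?thesis by (simp add: q_def)
qed

lemma gauss_JL_mgf_sq_norm:
  assumes t: "0 < t" and v: "0 < (\<Sum>j<d. (v j)\<^sup>2)" and \<theta>: "\<theta> < 1"
  shows "(\<integral>\<^sup>+G. ennreal (exp (\<theta> * t / (2 * (\<Sum>j<d. (v j)\<^sup>2)) * (\<Sum>i<t. (\<Sum>j<d. G (i,j) * v j)\<^sup>2)))
            \<partial>gauss_JL t d) = ennreal ((1 / sqrt (1 - \<theta>)) ^ t)"
proof -
  interpret prob_space "gauss_JL t d" by (rule prob_space_gauss_JL[OF t])
  define s where "s = (\<Sum>j<d. (v j)\<^sup>2)"
  define c where "c = \<theta> * t / (2 * s)"
  define \<tau> where "\<tau> = sqrt s / sqrt t"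
  have \<tau>: "0 < \<tau>" using v t by (simp add: \<tau>_def s_def)
  have c\<tau>: "2 * c * \<tau>\<^sup>2 = \<theta>" using v t by (simp add: c_def \<tau>_def s_def power_divide)
  let ?Y = "\<lambda>i G. \<Sum>j<d. G (i,j) * v j"
  have "(\<integral>\<^sup>+G. ennreal (exp (c * (\<Sum>i<t. (?Y i G)\<^sup>2))) \<partial>gauss_JL t d)
      = (\<integral>\<^sup>+G. (\<Prod>i<t. ennreal (exp (c * (?Y i G)\<^sup>2))) \<partial>gauss_JL t d)"
    by (intro nn_integral_cong) (simp add: prod_ennreal exp_sum sum_distrib_left)
  also have "\<dots> = (\<Prod>i<t. \<integral>\<^sup>+G. ennreal (exp (c * (?Y i G)\<^sup>2)) \<partial>gauss_JL t d)"
    using gauss_JL_rows_indep[OF t, of "\<lambda>i y. ennreal (exp (c * y\<^sup>2))" d v]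
    by (intro indep_vars_nn_integral) auto
  also have "\<dots> = (\<Prod>i<t. ennreal (1 / sqrt (1 - \<theta>)))"
  proof (rule prod.cong)
    fix i assume "i \<in> {..<t}"
    then have "(\<integral>\<^sup>+G. ennreal (exp (c * (?Y i G)\<^sup>2)) \<partial>gauss_JL t d)
        = (\<integral>\<^sup>+y. ennreal (normal_density 0 \<tau> y) * ennreal (exp (c * y\<^sup>2)) \<partial>lborel)"
      using distributed_nn_integral[OF gauss_JL_row_distributed[OF t _ v]]
      by (simp add: \<tau>_def s_def)
    also have "\<dots> = ennreal (1 / sqrt (1 - \<theta>))"
      using nn_integral_normal_density_exp_sq[OF \<tau>, of c] c\<tau> \<theta> by simp
    finally show "(\<integral>\<^sup>+G. ennreal (exp (c * (?Y i G)\<^sup>2)) \<partial>gauss_JL t d) = ennreal (1 / sqrt (1 - \<theta>))" .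
  qed simp
  also have "\<dots> = ennreal ((1 / sqrt (1 - \<theta>)) ^ t)"
    using \<theta> by (simp add: ennreal_power)
  finally show ?thesis by (simp add: c_def s_def)
qed

text \<open>Multiplying both sides by 1 - 1/a covers both tails at once: for a > 1 the event is
  the upper tail of the squared norm, for a < 1 the lower tail.\<close>

lemma gauss_JL_sq_norm_chernoff:
  assumes t: "0 < t" and v: "0 < (\<Sum>j<d. (v j)\<^sup>2)" and a: "0 < a" "a \<noteq> 1"
  shows "measure (gauss_JL t d) {G \<in> space (gauss_JL t d).
            (1 - 1/a) * (a * (\<Sum>j<d. (v j)\<^sup>2)) \<le> (1 - 1/a) * (\<Sum>i<t. (\<Sum>j<d. G (i,j) * v j)\<^sup>2)}
         \<le> exp (- (t/2) * (a - 1 - ln a))"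
proof -
  interpret prob_space "gauss_JL t d" by (rule prob_space_gauss_JL[OF t])
  define s where "s = (\<Sum>j<d. (v j)\<^sup>2)"
  define \<theta> where "\<theta> = 1 - 1/a"
  define c where "c = \<theta> * t / (2 * s)"
  define Q where "Q G = (\<Sum>i<t. (\<Sum>j<d. G (i,j) * v j)\<^sup>2)" for G
  have s: "0 < s" using v by (simp add: s_def)
  have \<theta>: "\<theta> < 1" "\<theta> * a = a - 1" using a by (auto simp: \<theta>_def field_simps)
  have Q [measurable]: "Q \<in> borel_measurable (gauss_JL t d)"
    unfolding Q_def by (auto intro!: borel_measurable_sum borel_measurable_times
        borel_measurable_power gauss_JL_entry_measurable)
  have "{G \<in> space (gauss_JL t d). \<theta> * (a * s) \<le> \<theta> * Q G}
      = {G \<in> space (gauss_JL t d). c * (a * s) \<le> c * Q G}"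
  proof -
    have "c * z = (t / (2 * s)) * (\<theta> * z)" for z by (simp add: c_def)
    moreover have "0 < t / (2 * s)" using s t by simp
    ultimately have "c * (a * s) \<le> c * Q G \<longleftrightarrow> \<theta> * (a * s) \<le> \<theta> * Q G" for G
      by (simp only: mult_le_cancel_left_pos)
    then show ?thesis by blast
  qed
  also have "emeasure (gauss_JL t d) \<dots>
      \<le> ennreal (exp (- 1 * (c * (a * s)))) *
          (\<integral>\<^sup>+G. ennreal (exp (1 * (c * Q G))) * indicator (space (gauss_JL t d)) G \<partial>gauss_JL t d)"
    by (intro Chernoff_ineq_nn_integral_ge) auto
  also have "(\<integral>\<^sup>+G. ennreal (exp (1 * (c * Q G))) * indicator (space (gauss_JL t d)) G \<partial>gauss_JL t d)
      = (\<integral>\<^sup>+G. ennreal (exp (c * Q G)) \<partial>gauss_JL t d)"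
    by (intro nn_integral_cong) simp
  also have "\<dots> = ennreal ((1 / sqrt (1 - \<theta>)) ^ t)"
    using gauss_JL_mgf_sq_norm[OF t v \<theta>(1)] by (simp only: c_def s_def Q_def)
  also have "1 / sqrt (1 - \<theta>) = exp (ln a / 2)"
    using a by (simp add: \<theta>_def real_sqrt_divide ln_sqrt[symmetric])
  also have "exp (ln a / 2) ^ t = exp (t * (ln a / 2))"
    by (rule exp_of_nat_mult[symmetric])
  also have "c * (a * s) = (\<theta> * a) * t / 2"
    using s by (simp add: c_def)
  finally have "measure (gauss_JL t d) {G \<in> space (gauss_JL t d). \<theta> * (a * s) \<le> \<theta> * Q G}
      \<le> exp (- ((a - 1) * t / 2)) * exp (t * (ln a / 2))"
    unfolding \<theta>(2) by (simp add: emeasure_eq_measure ennreal_mult''[symmetric])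
  also have "\<dots> = exp (- (t/2) * (a - 1 - ln a))"
    unfolding exp_add[symmetric] by (rule arg_cong[where f=exp]) (simp add: field_simps)
  finally show ?thesis by (simp add: \<theta>_def s_def Q_def)
qed

lemma sq_le_chernoff_exponent:
  fixes v :: real
  assumes "-1 < v"
  shows "v\<^sup>2 \<le> (1 + v)\<^sup>2 - 1 - ln ((1 + v)\<^sup>2)"
proof -
  have "ln ((1 + v)\<^sup>2) = 2 * ln (1 + v)"
    using assms by (simp add: ln_realpow)
  moreover have "ln (1 + v) \<le> v"
    using ln_le_minus_one[of "1 + v"] assms by simp
  ultimately show ?thesis by (simp add: power2_eq_square algebra_simps)
qed

lemma gauss_JL_sq_dist_tail:
  assumes t: "0 < t" and xy: "edist d x y \<noteq> 0" and v: "-1 < v" "v \<noteq> 0"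
  shows "measure (gauss_JL t d) {G \<in> space (gauss_JL t d).
            (1 - 1 / (1 + v)\<^sup>2) * ((1 + v)\<^sup>2 * (edist d x y)\<^sup>2)
              \<le> (1 - 1 / (1 + v)\<^sup>2) * (img_dist t d G x y)\<^sup>2}
         \<le> exp (- (t * v\<^sup>2 / 2))"
proof -
  define a where "a = (1 + v)\<^sup>2"
  have a: "0 < a" "a \<noteq> 1"
    using v by (auto simp: a_def power2_eq_1_iff)
  have e: "(edist d x y)\<^sup>2 = (\<Sum>j<d. (x j - y j)\<^sup>2)"
    unfolding edist_def enorm_def by (simp add: sum_nonneg)
  have img: "(img_dist t d G x y)\<^sup>2 = (\<Sum>i<t. (\<Sum>j<d. G (i,j) * (x j - y j))\<^sup>2)" for G
    unfolding img_dist_eq by (simp add: sum_nonneg)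
  have "0 < (\<Sum>j<d. (x j - y j)\<^sup>2)"
    using xy edist_nonneg[of d x y] unfolding e[symmetric] by simp
  from gauss_JL_sq_norm_chernoff[OF t this a]
  have "measure (gauss_JL t d) {G \<in> space (gauss_JL t d).
            (1 - 1/a) * (a * (edist d x y)\<^sup>2) \<le> (1 - 1/a) * (img_dist t d G x y)\<^sup>2}
         \<le> exp (- (t/2) * (a - 1 - ln a))"
    by (simp only: e img)
  also have "\<dots> \<le> exp (- (t * v\<^sup>2 / 2))"
    using sq_le_chernoff_exponent[OF v(1)] by (simp add: a_def mult_left_mono)
  finally show ?thesis by (simp only: a_def)
qed

lemma gauss_JL_upper_tail:
  assumes t: "0 < t" and u: "0 < u"
  shows "measure (gauss_JL t d) {G \<in> space (gauss_JL t d). (1 + u) * edist d x y < img_dist t d G x y}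
         \<le> exp (- (t * u\<^sup>2 / 2))"
proof (cases "edist d x y = 0")
  case True
  then show ?thesis by (simp add: img_dist_eq_0)
next
  case False
  have "1 < (1 + u)\<^sup>2"
    using u by (intro one_less_power) auto
  then have \<theta>: "0 < 1 - 1 / (1 + u)\<^sup>2"
    by (simp add: divide_less_eq)
  have "{G \<in> space (gauss_JL t d). (1 + u) * edist d x y < img_dist t d G x y}
      \<subseteq> {G \<in> space (gauss_JL t d). (1 - 1 / (1 + u)\<^sup>2) * ((1 + u)\<^sup>2 * (edist d x y)\<^sup>2)
              \<le> (1 - 1 / (1 + u)\<^sup>2) * (img_dist t d G x y)\<^sup>2}"
  proof safe
    fix G assume "(1 + u) * edist d x y < img_dist t d G x y"
    then have "((1 + u) * edist d x y)\<^sup>2 \<le> (img_dist t d G x y)\<^sup>2"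
      using u edist_nonneg[of d x y] by (intro power_mono) auto
    then show "(1 - 1 / (1 + u)\<^sup>2) * ((1 + u)\<^sup>2 * (edist d x y)\<^sup>2)
        \<le> (1 - 1 / (1 + u)\<^sup>2) * (img_dist t d G x y)\<^sup>2"
      using \<theta> by (intro mult_left_mono) (auto simp: power_mult_distrib)
  qed
  then have "measure (gauss_JL t d) {G \<in> space (gauss_JL t d). (1 + u) * edist d x y < img_dist t d G x y}
      \<le> measure (gauss_JL t d) {G \<in> space (gauss_JL t d). (1 - 1 / (1 + u)\<^sup>2) * ((1 + u)\<^sup>2 * (edist d x y)\<^sup>2)
              \<le> (1 - 1 / (1 + u)\<^sup>2) * (img_dist t d G x y)\<^sup>2}"
    using prob_space_gauss_JL[OF t] by (intro finite_measure.finite_measure_mono prob_space.finite_measure) measurable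
  also have "\<dots> \<le> exp (- (t * u\<^sup>2 / 2))"
    using gauss_JL_sq_dist_tail[OF t False, of u] u by simp
  finally show ?thesis .
qed

lemma gauss_JL_lower_tail:
  assumes t: "0 < t" and u: "0 < u" "u < 1"
  shows "measure (gauss_JL t d) {G \<in> space (gauss_JL t d). img_dist t d G x y < (1 - u) * edist d x y}
         \<le> exp (- (t * u\<^sup>2 / 2))"
proof (cases "edist d x y = 0")
  case True
  then show ?thesis by (simp add: img_dist_eq_0)
next
  case False
  have "(1 - u)\<^sup>2 < 1"
    using u by (intro power_less_one_iff[THEN iffD2]) auto
  then have \<theta>: "1 - 1 / (1 - u)\<^sup>2 < 0"
    using u by (simp add: divide_less_eq)
  have "{G \<in> space (gauss_JL t d). img_dist t d G x y < (1 - u) * edist d x y}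
      \<subseteq> {G \<in> space (gauss_JL t d). (1 - 1 / (1 - u)\<^sup>2) * ((1 - u)\<^sup>2 * (edist d x y)\<^sup>2)
              \<le> (1 - 1 / (1 - u)\<^sup>2) * (img_dist t d G x y)\<^sup>2}"
  proof safe
    fix G assume "img_dist t d G x y < (1 - u) * edist d x y"
    then have "(img_dist t d G x y)\<^sup>2 \<le> ((1 - u) * edist d x y)\<^sup>2"
      using edist_nonneg[of t] by (intro power_mono) auto
    then show "(1 - 1 / (1 - u)\<^sup>2) * ((1 - u)\<^sup>2 * (edist d x y)\<^sup>2)
        \<le> (1 - 1 / (1 - u)\<^sup>2) * (img_dist t d G x y)\<^sup>2"
      using \<theta> by (intro mult_left_mono_neg) (auto simp: power_mult_distrib)
  qed
  then have "measure (gauss_JL t d) {G \<in> space (gauss_JL t d). img_dist t d G x y < (1 - u) * edist d x y}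
      \<le> measure (gauss_JL t d) {G \<in> space (gauss_JL t d). (1 - 1 / (1 - u)\<^sup>2) * ((1 - u)\<^sup>2 * (edist d x y)\<^sup>2)
              \<le> (1 - 1 / (1 - u)\<^sup>2) * (img_dist t d G x y)\<^sup>2}"
    using prob_space_gauss_JL[OF t] by (intro finite_measure.finite_measure_mono prob_space.finite_measure) measurable
  also have "\<dots> \<le> exp (- (t * u\<^sup>2 / 2))"
    using gauss_JL_sq_dist_tail[OF t False, of "- u"] u by simp
  finally show ?thesis .
qed

definition doubling_pow2 :: "nat \<Rightarrow> (nat \<Rightarrow> real) set \<Rightarrow> nat \<Rightarrow> bool" where
  "doubling_pow2 d X lam \<longleftrightarrow>
     (\<forall>c\<in>Rd d. \<forall>r>0. \<exists>Cs. finite Cs \<and> Cs \<subseteq> Rd d \<and> card Cs \<le> 2 ^ lam \<and>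
        X \<inter> ecball d c r \<subseteq> (\<Union>s\<in>Cs. ecball d s (r/2)))"

text \<open>The infimum defining ddim need not be attained, but every admissible exponent below
  log 2 (2^lam + 1) already forces at most 2^lam half-radius balls.\<close>

lemma doubling_pow2_of_ddim_eq:
  assumes fin: "finite X" and X: "X \<subseteq> Rd d" and dd: "ddim d X = real lam"
  shows "doubling_pow2 d X lam"
  unfolding doubling_pow2_def
proof (intro ballI allI impI)
  fix c r assume c: "c \<in> Rd d" and r: "(0::real) < r"
  have "real (card X) \<le> 2 powr real (card X)"
    using of_nat_less_two_power[of "card X"] by (simp add: powr_realpow)
  then have "doubling_ok d X (real (card X))"
    unfolding doubling_ok_def
  proof (intro ballI allI impI)
    fix c' and r' :: real assume "0 < r'"
    with X have "X \<inter> ecball d c' r' \<subseteq> (\<Union>s\<in>X. ecball d s (r'/2))"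
      by (auto simp: ecball_def)
    with fin X \<open>real (card X) \<le> 2 powr real (card X)\<close>
    show "\<exists>Cs. finite Cs \<and> Cs \<subseteq> Rd d \<and> real (card Cs) \<le> 2 powr real (card X) \<and>
        X \<inter> ecball d c' r' \<subseteq> (\<Union>s\<in>Cs. ecball d s (r'/2))"
      by blast
  qed
  then have ne: "{l. doubling_ok d X l} \<noteq> {}" by blast
  define z where "z = log 2 (2 ^ lam + 1)"
  have pos: "(0::real) < 2 ^ lam + 1"
    by (intro add_pos_pos) simp_all
  have "real lam = log 2 (2 ^ lam)"
    by (simp add: log_nat_power)
  also have "\<dots> < z"
    unfolding z_def by (intro log_less) auto
  finally have "Inf {l. doubling_ok d X l} < z"
    using dd by (simp add: ddim_def)
  then obtain l where l: "doubling_ok d X l" "l < z"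
    using cInf_lessD[OF ne] by blast
  obtain Cs where Cs: "finite Cs" "Cs \<subseteq> Rd d" "real (card Cs) \<le> 2 powr l"
      "X \<inter> ecball d c r \<subseteq> (\<Union>s\<in>Cs. ecball d s (r/2))"
    using l(1)[unfolded doubling_ok_def, rule_format, OF c r] by blast
  have "2 powr l < 2 powr z" using l(2) by (rule powr_less_mono) simp
  also have "2 powr z = 2 ^ lam + 1" unfolding z_def using pos by simp
  finally have "real (card Cs) < real (2 ^ lam + 1)" using Cs(3) by simp
  then have "card Cs \<le> 2 ^ lam" by linarith
  with Cs show "\<exists>Cs. finite Cs \<and> Cs \<subseteq> Rd d \<and> card Cs \<le> 2 ^ lam \<and>
      X \<inter> ecball d c r \<subseteq> (\<Union>s\<in>Cs. ecball d s (r/2))" by blast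
qed

lemma doubling_pow2_refine_cover:
  assumes D: "doubling_pow2 d P lam" and P: "P \<subseteq> Rd d"
    and S: "finite S" "S \<subseteq> Rd d" "\<forall>x\<in>P. \<exists>s\<in>S. edist d s x \<le> R" and R: "0 < R"
  shows "\<exists>C. finite C \<and> C \<subseteq> Rd d \<and> card C \<le> card S * 2 ^ (lam * m) \<and>
           (\<forall>x\<in>P. \<exists>c\<in>C. edist d c x \<le> R / 2 ^ m)"
proof (induction m)
  case 0
  show ?case using S by (intro exI[of _ S]) auto
next
  case (Suc m)
  then obtain C where C: "finite C" "C \<subseteq> Rd d" "card C \<le> card S * 2 ^ (lam * m)"
    "\<forall>x\<in>P. \<exists>c\<in>C. edist d c x \<le> R / 2 ^ m" by blast
  have "\<exists>Cs. finite Cs \<and> Cs \<subseteq> Rd d \<and> card Cs \<le> 2 ^ lam \<and>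
           P \<inter> ecball d c (R / 2 ^ m) \<subseteq> (\<Union>s\<in>Cs. ecball d s (R / 2 ^ m / 2))" if "c \<in> C" for c
  proof -
    have "c \<in> Rd d" "0 < R / 2 ^ m" using C(2) that R by auto
    then show ?thesis using D unfolding doubling_pow2_def by blast
  qed
  then obtain Cs where Cs: "\<And>c. c \<in> C \<Longrightarrow> finite (Cs c) \<and> Cs c \<subseteq> Rd d \<and> card (Cs c) \<le> 2 ^ lam \<and>
           P \<inter> ecball d c (R / 2 ^ m) \<subseteq> (\<Union>s\<in>Cs c. ecball d s (R / 2 ^ m / 2))"
    by metis
  define C' where "C' = (\<Union>c\<in>C. Cs c)"
  have "card C' \<le> card S * 2 ^ (lam * Suc m)"
  proof -
    have "card C' \<le> (\<Sum>c\<in>C. card (Cs c))" unfolding C'_def by (rule card_UN_le) (rule C(1))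
    also have "\<dots> \<le> card C * 2 ^ lam" using Cs sum_mono[of C "\<lambda>c. card (Cs c)" "\<lambda>_. 2 ^ lam"] by simp
    also have "\<dots> \<le> card S * 2 ^ (lam * m) * 2 ^ lam" using C(3) by simp
    finally show ?thesis by (simp add: power_add algebra_simps)
  qed
  moreover have "\<exists>c\<in>C'. edist d c x \<le> R / 2 ^ Suc m" if x: "x \<in> P" for x
  proof -
    obtain c where c: "c \<in> C" "edist d c x \<le> R / 2 ^ m" using C(4) x by blast
    then have "x \<in> P \<inter> ecball d c (R / 2 ^ m)" using x P by (auto simp: ecball_def)
    then obtain s where "s \<in> Cs c" "x \<in> ecball d s (R / 2 ^ m / 2)" using Cs[OF c(1)] by blast
    then show ?thesis using c(1) by (auto simp: C'_def ecball_def mult.commute)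
  qed
  moreover have "finite C'" "C' \<subseteq> Rd d" using C(1) Cs by (auto simp: C'_def)
  ultimately show ?case by blast
qed


text \<open>Moving each center of the refined cover to a nearby point of P doubles the radius.\<close>

lemma doubling_pow2_net:
  assumes D: "doubling_pow2 d P lam" and P: "P \<subseteq> Rd d"
    and S: "finite S" "S \<subseteq> P" "\<forall>x\<in>P. \<exists>s\<in>S. edist d x s \<le> R" and R: "0 \<le> R"
  shows "\<exists>N. N \<subseteq> P \<and> card N \<le> card S * 2 ^ (lam * m) \<and> (\<forall>x\<in>P. \<exists>y\<in>N. edist d x y \<le> 2 * R / 2 ^ m)"
proof (cases "R = 0")
  case True
  then show ?thesis using S by (intro exI[of _ S]) auto
next
  case False
  have SR: "S \<subseteq> Rd d" using S(2) P by blast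
  have cov: "\<forall>x\<in>P. \<exists>s\<in>S. edist d s x \<le> R" using S(3) by (simp add: edist_commute)
  have "0 < R" using R False by simp
  then obtain C where C: "finite C" "card C \<le> card S * 2 ^ (lam * m)"
      "\<forall>x\<in>P. \<exists>c\<in>C. edist d c x \<le> R / 2 ^ m"
    using doubling_pow2_refine_cover[OF D P S(1) SR cov, of m] by blast
  define C0 where "C0 = {c\<in>C. \<exists>p\<in>P. edist d c p \<le> R / 2 ^ m}"
  have "\<forall>c\<in>C0. \<exists>p. p \<in> P \<and> edist d c p \<le> R / 2 ^ m"
    by (auto simp: C0_def)
  then obtain near where near: "\<And>c. c \<in> C0 \<Longrightarrow> near c \<in> P \<and> edist d c (near c) \<le> R / 2 ^ m"
    by metis
  have "finite C0" "C0 \<subseteq> C" using C(1) by (auto simp: C0_def)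
  then have "card (near ` C0) \<le> card C"
    by (meson card_image_le card_mono C(1) order_trans)
  moreover have "\<exists>y\<in>near ` C0. edist d x y \<le> 2 * R / 2 ^ m" if x: "x \<in> P" for x
  proof -
    obtain c where c: "c \<in> C" "edist d c x \<le> R / 2 ^ m" using C(3) x by blast
    then have c0: "c \<in> C0" using x by (auto simp: C0_def)
    have "edist d x (near c) \<le> edist d c x + edist d c (near c)"
      using edist_triangle[of d x "near c" c] by (simp add: edist_commute)
    also have "\<dots> \<le> 2 * R / 2 ^ m" using c(2) near[OF c0] by simp
    finally show ?thesis using c0 by blast
  qed
  moreover have "near ` C0 \<subseteq> P" using near by blast
  ultimately show ?thesis using C(2) by (intro exI[of _ "near ` C0"]) auto
qed

lemma KC_centers:
  assumes fin: "finite P" and ne: "P \<noteq> {}" and k: "1 \<le> k"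
  shows "\<exists>S. S \<subseteq> P \<and> card S \<le> k \<and> (\<forall>x\<in>P. \<exists>s\<in>S. edist d x s \<le> KC d k P)"
proof -
  define F where "F = {S. S \<subseteq> P \<and> S \<noteq> {} \<and> card S \<le> k}"
  define rad where "rad S = Max ((\<lambda>x. Min ((\<lambda>s. edist d x s) ` S)) ` P)" for S
  obtain p where p: "p \<in> P" using ne by auto
  have "finite F" using fin by (auto simp: F_def intro: finite_subset[of _ "Pow P"])
  moreover have "{p} \<in> F" using p k by (auto simp: F_def)
  ultimately have "Min (rad ` F) \<in> rad ` F" by (intro Min_in) auto
  moreover have "KC d k P = Min (rad ` F)" unfolding KC_def rad_def F_def ..
  ultimately obtain S where "S \<in> F" and KC: "KC d k P = rad S" by auto
  then have S: "S \<subseteq> P" "S \<noteq> {}" "card S \<le> k" by (auto simp: F_def)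
  have "\<exists>s\<in>S. edist d x s \<le> KC d k P" if x: "x \<in> P" for x
  proof -
    have "finite S" using S(1) fin by (rule finite_subset)
    then have "Min ((\<lambda>s. edist d x s) ` S) \<in> (\<lambda>s. edist d x s) ` S"
      using S(2) by (intro Min_in) auto
    then obtain s where s: "s \<in> S" "edist d x s = Min ((\<lambda>s. edist d x s) ` S)"
      by auto
    have "Min ((\<lambda>s. edist d x s) ` S) \<le> rad S" unfolding rad_def using fin x by (intro Max_ge) auto
    then show ?thesis using s KC by metis
  qed
  with S show ?thesis by blast
qed

lemma KC_nonneg:
  assumes "finite P" "P \<noteq> {}" "1 \<le> k"
  shows "0 \<le> KC d k P"
proof -
  obtain S where S: "\<forall>x\<in>P. \<exists>s\<in>S. edist d x s \<le> KC d k P" using KC_centers[OF assms] by blast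
  obtain p where "p \<in> P" using assms(2) by auto
  with S obtain s where "edist d p s \<le> KC d k P" by blast
  with edist_nonneg[of d p s] show ?thesis by linarith
qed

lemma ex_dyadic_scale_below_pos_dists:
  assumes "finite P"
  shows "\<exists>M. \<forall>x\<in>P. \<forall>y\<in>P. edist d x y \<le> \<rho> / 2 ^ M \<longrightarrow> edist d x y = 0"
proof -
  define E where "E = {e. \<exists>x\<in>P. \<exists>y\<in>P. e = edist d x y \<and> 0 < e}"
  define \<delta> where "\<delta> = Min (insert 1 E)"
  have "E \<subseteq> (\<lambda>(x, y). edist d x y) ` (P \<times> P)" by (auto simp: E_def)
  then have fin: "finite E" using assms by (auto intro: finite_subset)
  then have "0 < \<delta>" unfolding \<delta>_def by (subst Min_gr_iff) (auto simp: E_def)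
  then obtain M where "\<rho> / \<delta> < 2 ^ M" using real_arch_pow[of 2 "\<rho> / \<delta>"] by auto
  with \<open>0 < \<delta>\<close> have M: "\<rho> / 2 ^ M < \<delta>" by (simp add: field_simps)
  have "edist d x y = 0" if "x \<in> P" "y \<in> P" "edist d x y \<le> \<rho> / 2 ^ M" for x y
  proof (rule ccontr)
    assume "edist d x y \<noteq> 0"
    with edist_nonneg[of d x y] that(1,2) have "edist d x y \<in> E" by (auto simp: E_def)
    then have "\<delta> \<le> edist d x y" unfolding \<delta>_def using fin by (intro Min_le) auto
    with M that(3) show False by linarith
  qed
  then show ?thesis by blast
qed

lemma sum_add2_div_pow2_le: "(\<Sum>j<M. (real j + 2) / 2 ^ j) \<le> 6"
proof -
  have "(\<Sum>j<M. (real j + 2) / 2 ^ j) = 6 - (2 * real M + 6) / 2 ^ M"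
  proof (induction M)
    case (Suc M)
    have "(\<Sum>j<Suc M. (real j + 2) / 2 ^ j) = 6 - (2 * real M + 6) / 2 ^ M + (real M + 2) / 2 ^ M"
      using Suc.IH by simp
    also have "\<dots> = 6 - (2 * real (Suc M) + 6) / 2 ^ Suc M"
      by (simp add: field_simps)
    finally show ?case .
  qed simp
  then show ?thesis by simp
qed

text \<open>The nearest points y j \<in> N j to x form a path that reaches x (up to distance 0) at
  level M. Its j-th link has length at most 3/2 \<rho>/2^j and is stretched by at most j + 2; as
  the sum of (j + 2)/2^j is at most 6, the image of the path has length at most 9 \<rho>.\<close>

lemma chaining_bound:
  assumes NP: "\<And>j. N j \<subseteq> P"
    and Ncov: "\<And>j. \<forall>x\<in>P. \<exists>y\<in>N j. edist d x y \<le> \<rho> / 2 ^ j"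
    and deep: "\<And>x y. x \<in> P \<Longrightarrow> y \<in> P \<Longrightarrow> edist d x y \<le> \<rho> / 2 ^ M \<Longrightarrow> edist d x y = 0"
    and link: "\<And>j y y'. j < M \<Longrightarrow> y \<in> N j \<Longrightarrow> y' \<in> N (Suc j) \<Longrightarrow>
        img_dist t d G y y' \<le> (real j + 2) * edist d y y'"
    and x: "x \<in> P" and \<rho>: "0 \<le> \<rho>"
  shows "\<exists>a\<in>N 0. edist d x a \<le> \<rho> \<and> img_dist t d G x a \<le> 9 * \<rho>"
proof -
  have "\<forall>j. \<exists>y. y \<in> N j \<and> edist d x y \<le> \<rho> / 2 ^ j"
    using Ncov x by blast
  then obtain y where y: "\<And>j. y j \<in> N j \<and> edist d x (y j) \<le> \<rho> / 2 ^ j"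
    by metis
  have step: "img_dist t d G (y j) (y (Suc j)) \<le> (real j + 2) * (3 / 2 * \<rho> / 2 ^ j)" if "j < M" for j
  proof -
    have "edist d (y j) (y (Suc j)) \<le> edist d x (y j) + edist d x (y (Suc j))"
      using edist_triangle[of d "y j" "y (Suc j)" x] by (simp add: edist_commute)
    also have "\<dots> \<le> 3 / 2 * \<rho> / 2 ^ j"
      using y[of j] y[of "Suc j"] by (simp add: field_simps)
    finally show ?thesis
      using link[OF that, of "y j" "y (Suc j)"] y
      by (meson mult_left_mono order_trans of_nat_0_le_iff add_nonneg_nonneg zero_le_numeral)
  qed
  have path: "img_dist t d G (y 0) (y n) \<le> (\<Sum>j<n. (real j + 2) * (3 / 2 * \<rho> / 2 ^ j))" if "n \<le> M" for n
    using that
  proof (induction n)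
    case (Suc n)
    then show ?case
      using edist_triangle[of t "mat_apply t d G (y 0)" "mat_apply t d G (y (Suc n))" "mat_apply t d G (y n)"]
        step[of n] by simp
  qed simp
  have "edist d (y M) x = 0"
    using deep[of "y M" x] y[of M] NP x by (auto simp: edist_commute)
  then have "img_dist t d G x (y 0) \<le> img_dist t d G (y 0) (y M)"
    using edist_triangle[of t "mat_apply t d G (y 0)" "mat_apply t d G x" "mat_apply t d G (y M)"]
    by (simp add: img_dist_eq_0 edist_commute)
  also have "\<dots> \<le> 3 / 2 * \<rho> * (\<Sum>j<M. (real j + 2) / 2 ^ j)"
    using path[of M] by (simp add: sum_distrib_left field_simps)
  also have "\<dots> \<le> 3 / 2 * \<rho> * 6"
    using \<rho> sum_add2_div_pow2_le[of M] by (intro mult_left_mono) auto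
  finally show ?thesis using y[of 0] by auto
qed

lemma additive_distortion_via_net:
  fixes \<epsilon> \<rho> R :: real
  assumes \<epsilon>: "0 < \<epsilon>" "\<epsilon> < 1" and \<rho>: "0 \<le> \<rho>" "22 * \<rho> \<le> \<epsilon> * R"
    and a1: "edist d x1 a1 \<le> \<rho>" "img_dist t d G x1 a1 \<le> 9 * \<rho>"
    and a2: "edist d x2 a2 \<le> \<rho>" "img_dist t d G x2 a2 \<le> 9 * \<rho>"
    and net: "(1 - \<epsilon>) * edist d a1 a2 \<le> img_dist t d G a1 a2"
      "img_dist t d G a1 a2 \<le> (1 + \<epsilon>) * edist d a1 a2"
  shows "(1 - \<epsilon>) * edist d x1 x2 - \<epsilon> * R \<le> img_dist t d G x1 x2 \<and>
         img_dist t d G x1 x2 \<le> (1 + \<epsilon>) * edist d x1 x2 + \<epsilon> * R"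
proof -
  define D where "D = edist d x1 x2"
  define Da where "Da = edist d a1 a2"
  define E where "E = img_dist t d G x1 x2"
  define Ea where "Ea = img_dist t d G a1 a2"
  have D: "D \<le> Da + 2 * \<rho>" "Da \<le> D + 2 * \<rho>"
    using edist_quadrilateral[of d x1 x2 a1 a2] edist_quadrilateral[of d a1 a2 x1 x2] a1 a2
    unfolding D_def Da_def by (simp_all add: edist_commute)
  have E: "E \<le> Ea + 18 * \<rho>" "Ea \<le> E + 18 * \<rho>"
    using edist_quadrilateral[of t "mat_apply t d G x1" "mat_apply t d G x2" "mat_apply t d G a1" "mat_apply t d G a2"]
      edist_quadrilateral[of t "mat_apply t d G a1" "mat_apply t d G a2" "mat_apply t d G x1" "mat_apply t d G x2"] a1 a2
    unfolding E_def Ea_def by (simp_all add: edist_commute)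
  have "(1 + \<epsilon>) * Da \<le> (1 + \<epsilon>) * (D + 2 * \<rho>)" "(1 - \<epsilon>) * (D - 2 * \<rho>) \<le> (1 - \<epsilon>) * Da"
    using D \<epsilon> by (simp_all add: mult_left_mono)
  then have "(1 + \<epsilon>) * Da \<le> (1 + \<epsilon>) * D + 2 * \<rho> + 2 * (\<epsilon> * \<rho>)"
    "(1 - \<epsilon>) * D - 2 * \<rho> + 2 * (\<epsilon> * \<rho>) \<le> (1 - \<epsilon>) * Da"
    by (simp_all add: algebra_simps)
  moreover have "0 \<le> \<epsilon> * \<rho>" "\<epsilon> * \<rho> \<le> \<rho>"
    using \<epsilon> \<rho> by (simp_all add: mult_left_le_one_le)
  ultimately show ?thesis
    using E net \<rho> unfolding D_def[symmetric] Da_def[symmetric] E_def[symmetric] Ea_def[symmetric]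
    by linarith
qed

lemma exp_neg_le_inverse_pow2:
  assumes L: "ln 2 \<le> L" and c: "real n \<le> c"
  shows "exp (- (c * L)) \<le> 1 / 2 ^ n"
proof -
  have "real n * ln 2 \<le> c * L"
    using L c ln_ge_zero[of 2] by (intro mult_mono) auto
  then have "exp (- (c * L)) \<le> exp (- (real n * ln 2))" by simp
  also have "\<dots> = 1 / 2 ^ n"
    by (simp add: exp_minus exp_of_nat_mult inverse_eq_divide)
  finally show ?thesis .
qed

lemma sum_inverse_pow2_shift4_le: "(\<Sum>j<M. 1 / (2::real) ^ (j + 4)) \<le> 1 / 8"
proof -
  have "(\<Sum>j<M. 1 / (2::real) ^ (j + 4)) = (1 - 1 / 2 ^ M) / 8"
  proof (induction M)
    case (Suc M)
    then show ?case by (simp add: power_add field_simps)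
  qed simp
  then show ?thesis by simp
qed

lemma gauss_JL_pair_distortion_prob:
  assumes t: "0 < t" and \<epsilon>: "0 < \<epsilon>" "\<epsilon> < 1"
  shows "measure (gauss_JL t d) {G \<in> space (gauss_JL t d).
           \<not> ((1 - \<epsilon>) * edist d a b \<le> img_dist t d G a b \<and> img_dist t d G a b \<le> (1 + \<epsilon>) * edist d a b)}
         \<le> 2 * exp (- (t * \<epsilon>\<^sup>2 / 2))"
proof -
  interpret prob_space "gauss_JL t d" by (rule prob_space_gauss_JL[OF t])
  have "measure (gauss_JL t d) {G \<in> space (gauss_JL t d).
           \<not> ((1 - \<epsilon>) * edist d a b \<le> img_dist t d G a b \<and> img_dist t d G a b \<le> (1 + \<epsilon>) * edist d a b)}
      \<le> measure (gauss_JL t d) {G \<in> space (gauss_JL t d). (1 + \<epsilon>) * edist d a b < img_dist t d G a b}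
        + measure (gauss_JL t d) {G \<in> space (gauss_JL t d). img_dist t d G a b < (1 - \<epsilon>) * edist d a b}"
    by (rule order_trans[OF _ measure_Un_le]) (auto intro!: finite_measure_mono)
  also have "\<dots> \<le> exp (- (t * \<epsilon>\<^sup>2 / 2)) + exp (- (t * \<epsilon>\<^sup>2 / 2))"
    by (intro add_mono gauss_JL_upper_tail gauss_JL_lower_tail t \<epsilon>)
  finally show ?thesis by simp
qed

lemma gauss_JL_net_distortion_prob:
  assumes t: "0 < t" and \<epsilon>: "0 < \<epsilon>" "\<epsilon> < 1" and N: "finite N" "real (card N) \<le> exp (7 * L)"
    and L: "ln 2 \<le> L" "64 * L \<le> t * \<epsilon>\<^sup>2"
  shows "measure (gauss_JL t d) (\<Union>(a, b)\<in>N \<times> N. {G \<in> space (gauss_JL t d).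
           \<not> ((1 - \<epsilon>) * edist d a b \<le> img_dist t d G a b \<and> img_dist t d G a b \<le> (1 + \<epsilon>) * edist d a b)})
         \<le> 2 / 2 ^ 18"
proof -
  interpret prob_space "gauss_JL t d" by (rule prob_space_gauss_JL[OF t])
  have "measure (gauss_JL t d) (\<Union>(a, b)\<in>N \<times> N. {G \<in> space (gauss_JL t d).
           \<not> ((1 - \<epsilon>) * edist d a b \<le> img_dist t d G a b \<and> img_dist t d G a b \<le> (1 + \<epsilon>) * edist d a b)})
      \<le> (\<Sum>(a, b)\<in>N \<times> N. 2 * exp (- (t * \<epsilon>\<^sup>2 / 2)))"
  proof (intro order_trans[OF finite_measure_subadditive_finite] sum_mono)
    fix i assume "i \<in> N \<times> N"
    then show "measure (gauss_JL t d) (case i of (a, b) \<Rightarrow> {G \<in> space (gauss_JL t d).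
           \<not> ((1 - \<epsilon>) * edist d a b \<le> img_dist t d G a b \<and> img_dist t d G a b \<le> (1 + \<epsilon>) * edist d a b)})
        \<le> (case i of (a, b) \<Rightarrow> 2 * exp (- (t * \<epsilon>\<^sup>2 / 2)))"
      by (cases i) (simp only: prod.case gauss_JL_pair_distortion_prob[OF t \<epsilon>])
  qed (use N(1) in \<open>auto split: prod.splits\<close>)
  also have "\<dots> = real (card N) * real (card N) * (2 * exp (- (t * \<epsilon>\<^sup>2 / 2)))"
    by (simp add: card_cartesian_product)
  also have "\<dots> \<le> exp (7 * L) * exp (7 * L) * (2 * exp (- (32 * L)))"
    using N(2) L(2) by (intro mult_mono) auto
  also have "\<dots> = 2 * exp (- (18 * L))"
    by (simp add: exp_add[symmetric] exp_minus field_simps)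
  also have "\<dots> \<le> 2 / 2 ^ 18"
    using exp_neg_le_inverse_pow2[OF L(1), of 18 18] by simp
  finally show ?thesis .
qed

text \<open>A link between consecutive nets at level j may be stretched by the factor j + 2; the
  Gaussian tail for this stretch beats the growth of the net sizes at every level.\<close>

lemma gauss_JL_links_stretch_prob:
  assumes t: "0 < t" and N: "\<And>j. finite (N j)" "\<And>j. real (card (N j)) \<le> exp ((real j + 7) * L)"
    and L: "ln 2 \<le> L" "64 * L \<le> t"
  shows "measure (gauss_JL t d) (\<Union>(j, y, y')\<in>Sigma {..<M} (\<lambda>j. N j \<times> N (Suc j)).
           {G \<in> space (gauss_JL t d). (real j + 2) * edist d y y' < img_dist t d G y y'})
         \<le> 1 / 8"
proof -
  interpret prob_space "gauss_JL t d" by (rule prob_space_gauss_JL[OF t])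
  have level: "real (card (N j)) * real (card (N (Suc j))) * exp (- (t * (real j + 1)\<^sup>2 / 2))
      \<le> 1 / 2 ^ (j + 4)" for j
  proof -
    have "exp (- (t * (real j + 1)\<^sup>2 / 2)) \<le> exp (- (32 * (real j + 1)\<^sup>2 * L))"
      using L(2) by (simp add: mult_right_mono)
    then have "real (card (N j)) * real (card (N (Suc j))) * exp (- (t * (real j + 1)\<^sup>2 / 2))
        \<le> exp ((real j + 7) * L) * exp ((real j + 8) * L) * exp (- (32 * (real j + 1)\<^sup>2 * L))"
      using N(2)[of j] N(2)[of "Suc j"] by (intro mult_mono) (auto simp: add.commute)
    also have "\<dots> = exp (- ((32 * (real j + 1)\<^sup>2 - 2 * real j - 15) * L))"
      by (simp add: exp_add[symmetric] algebra_simps)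
    also have "\<dots> \<le> 1 / 2 ^ (j + 4)"
      by (rule exp_neg_le_inverse_pow2[OF L(1)]) (simp add: power2_eq_square algebra_simps)
    finally show ?thesis .
  qed
  have "measure (gauss_JL t d) (\<Union>(j, y, y')\<in>Sigma {..<M} (\<lambda>j. N j \<times> N (Suc j)).
           {G \<in> space (gauss_JL t d). (real j + 2) * edist d y y' < img_dist t d G y y'})
      \<le> (\<Sum>(j, y, y')\<in>Sigma {..<M} (\<lambda>j. N j \<times> N (Suc j)). exp (- (t * (real j + 1)\<^sup>2 / 2)))"
  proof (intro order_trans[OF finite_measure_subadditive_finite] sum_mono)
    fix i assume "i \<in> Sigma {..<M} (\<lambda>j. N j \<times> N (Suc j))"
    then show "measure (gauss_JL t d) (case i of (j, y, y') \<Rightarrow>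
           {G \<in> space (gauss_JL t d). (real j + 2) * edist d y y' < img_dist t d G y y'})
        \<le> (case i of (j, y, y') \<Rightarrow> exp (- (t * (real j + 1)\<^sup>2 / 2)))"
      using gauss_JL_upper_tail[OF t, of "real (fst i) + 1"]
      by (auto split: prod.splits simp: add.commute add.left_commute)
  qed (use N(1) in \<open>auto split: prod.splits\<close>)
  also have "\<dots> = (\<Sum>j<M. real (card (N j)) * real (card (N (Suc j))) * exp (- (t * (real j + 1)\<^sup>2 / 2)))"
    using N(1) by (subst sum.Sigma[symmetric]) (auto simp: card_cartesian_product)
  also have "\<dots> \<le> (\<Sum>j<M. 1 / 2 ^ (j + 4))"
    by (intro sum_mono level)
  also have "\<dots> \<le> 1 / 8"
    by (rule sum_inverse_pow2_shift4_le)
  finally show ?thesis .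
qed

lemma gauss_JL_nets_good_prob:
  assumes t: "0 < t" and \<epsilon>: "0 < \<epsilon>" "\<epsilon> < 1"
    and N: "\<And>j. finite (N j)" "\<And>j. real (card (N j)) \<le> exp ((real j + 7) * L)"
    and L: "ln 2 \<le> L" "64 * L \<le> t * \<epsilon>\<^sup>2"
  shows "2 / 3 \<le> measure (gauss_JL t d) {G \<in> space (gauss_JL t d).
           (\<forall>a\<in>N 0. \<forall>b\<in>N 0. (1 - \<epsilon>) * edist d a b \<le> img_dist t d G a b \<and>
                              img_dist t d G a b \<le> (1 + \<epsilon>) * edist d a b) \<and>
           (\<forall>j<M. \<forall>y\<in>N j. \<forall>y'\<in>N (Suc j). img_dist t d G y y' \<le> (real j + 2) * edist d y y')}"
    (is "_ \<le> measure _ ?good")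
proof -
  interpret prob_space "gauss_JL t d" by (rule prob_space_gauss_JL[OF t])
  let ?net = "\<Union>(a, b)\<in>N 0 \<times> N 0. {G \<in> space (gauss_JL t d).
           \<not> ((1 - \<epsilon>) * edist d a b \<le> img_dist t d G a b \<and> img_dist t d G a b \<le> (1 + \<epsilon>) * edist d a b)}"
  let ?links = "\<Union>(j, y, y')\<in>Sigma {..<M} (\<lambda>j. N j \<times> N (Suc j)).
           {G \<in> space (gauss_JL t d). (real j + 2) * edist d y y' < img_dist t d G y y'}"
  have sets: "?net \<in> sets (gauss_JL t d)" "?links \<in> sets (gauss_JL t d)"
    using N(1) by (auto intro!: sets.finite_UN split: prod.splits)
  have "t * \<epsilon>\<^sup>2 \<le> t"
    using \<epsilon> by (simp add: mult_left_le power_le_one)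
  then have "measure (gauss_JL t d) ?links \<le> 1 / 8"
    using L by (intro gauss_JL_links_stretch_prob[OF t N]) auto
  moreover have "measure (gauss_JL t d) ?net \<le> 2 / 2 ^ 18"
    using N(2)[of 0] by (intro gauss_JL_net_distortion_prob[OF t \<epsilon> N(1) _ L]) simp
  ultimately have "measure (gauss_JL t d) (?net \<union> ?links) \<le> 2 / 2 ^ 18 + 1 / 8"
    by (intro order_trans[OF measure_Un_le[OF sets]]) simp
  moreover have "space (gauss_JL t d) - (?net \<union> ?links) \<subseteq> ?good"
    by (auto simp: not_less)
  moreover have "?good \<in> sets (gauss_JL t d)"
    using N(1) by measurable
  ultimately have "1 - (2 / 2 ^ 18 + 1 / 8) \<le> measure (gauss_JL t d) ?good"
    using sets finite_measure_mono[of "space (gauss_JL t d) - (?net \<union> ?links)" ?good] by (simp add: prob_compl)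
  then show ?thesis by simp
qed

lemma gauss_JL_additive_distortion:
  fixes \<epsilon> \<rho> R L :: real
  assumes t: "0 < t" and \<epsilon>: "0 < \<epsilon>" "\<epsilon> < 1" and P: "finite P"
    and N: "\<And>j. N j \<subseteq> P" "\<And>j. real (card (N j)) \<le> exp ((real j + 7) * L)"
    and Ncov: "\<And>j. \<forall>x\<in>P. \<exists>y\<in>N j. edist d x y \<le> \<rho> / 2 ^ j"
    and deep: "\<And>x y. x \<in> P \<Longrightarrow> y \<in> P \<Longrightarrow> edist d x y \<le> \<rho> / 2 ^ M \<Longrightarrow> edist d x y = 0"
    and \<rho>: "0 \<le> \<rho>" "22 * \<rho> \<le> \<epsilon> * R"
    and L: "ln 2 \<le> L" "64 * L \<le> t * \<epsilon>\<^sup>2"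
  shows "2 / 3 \<le> measure (gauss_JL t d) {G \<in> space (gauss_JL t d). \<forall>x1\<in>P. \<forall>x2\<in>P.
            (1 - \<epsilon>) * edist d x1 x2 - \<epsilon> * R \<le> img_dist t d G x1 x2 \<and>
            img_dist t d G x1 x2 \<le> (1 + \<epsilon>) * edist d x1 x2 + \<epsilon> * R}"
    (is "_ \<le> measure _ ?target")
proof -
  interpret prob_space "gauss_JL t d" by (rule prob_space_gauss_JL[OF t])
  have fin: "finite (N j)" for j using N(1) P by (rule finite_subset)
  let ?good = "{G \<in> space (gauss_JL t d).
           (\<forall>a\<in>N 0. \<forall>b\<in>N 0. (1 - \<epsilon>) * edist d a b \<le> img_dist t d G a b \<and>
                              img_dist t d G a b \<le> (1 + \<epsilon>) * edist d a b) \<and>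
           (\<forall>j<M. \<forall>y\<in>N j. \<forall>y'\<in>N (Suc j). img_dist t d G y y' \<le> (real j + 2) * edist d y y')}"
  have "?good \<subseteq> ?target"
  proof
    fix G assume G: "G \<in> ?good"
    then have link: "\<And>j y y'. j < M \<Longrightarrow> y \<in> N j \<Longrightarrow> y' \<in> N (Suc j) \<Longrightarrow>
        img_dist t d G y y' \<le> (real j + 2) * edist d y y'" by blast
    have "(1 - \<epsilon>) * edist d x1 x2 - \<epsilon> * R \<le> img_dist t d G x1 x2 \<and>
          img_dist t d G x1 x2 \<le> (1 + \<epsilon>) * edist d x1 x2 + \<epsilon> * R" if x: "x1 \<in> P" "x2 \<in> P" for x1 x2
    proof -
      obtain a1 where a1: "a1 \<in> N 0" "edist d x1 a1 \<le> \<rho>" "img_dist t d G x1 a1 \<le> 9 * \<rho>"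
        using chaining_bound[OF N(1) Ncov deep link x(1) \<rho>(1)] by blast
      obtain a2 where a2: "a2 \<in> N 0" "edist d x2 a2 \<le> \<rho>" "img_dist t d G x2 a2 \<le> 9 * \<rho>"
        using chaining_bound[OF N(1) Ncov deep link x(2) \<rho>(1)] by blast
      have "(1 - \<epsilon>) * edist d a1 a2 \<le> img_dist t d G a1 a2" "img_dist t d G a1 a2 \<le> (1 + \<epsilon>) * edist d a1 a2"
        using G a1(1) a2(1) by auto
      then show ?thesis by (rule additive_distortion_via_net[OF \<epsilon> \<rho> a1(2,3) a2(2,3)])
    qed
    with G show "G \<in> ?target" by blast
  qed
  moreover have "?target \<in> sets (gauss_JL t d)"
    using P by measurable
  ultimately have "measure (gauss_JL t d) ?good \<le> measure (gauss_JL t d) ?target"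
    by (rule finite_measure_mono)
  with gauss_JL_nets_good_prob[OF t \<epsilon> fin N(2) L, of d M] show ?thesis by linarith
qed

lemma ex_pow2_scale:
  fixes \<epsilon> :: real
  assumes \<epsilon>: "0 < \<epsilon>" "\<epsilon> < 1"
  shows "\<exists>m. 44 / \<epsilon> \<le> 2 ^ m \<and> (2::real) ^ m \<le> (2 / \<epsilon>) ^ 7"
proof -
  define m where "m = nat \<lceil>log 2 (44 / \<epsilon>)\<rceil>"
  have y: "1 \<le> 44 / \<epsilon>" using \<epsilon> by (simp add: field_simps)
  then have "0 \<le> log 2 (44 / \<epsilon>)" using \<epsilon> by (subst zero_le_log_cancel_iff) auto
  then have m: "real m = of_int \<lceil>log 2 (44 / \<epsilon>)\<rceil>" by (simp add: m_def)
  have pow: "(2::real) ^ m = 2 powr real m" by (simp add: powr_realpow)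
  have "44 / \<epsilon> = 2 powr log 2 (44 / \<epsilon>)" using y \<epsilon> by (intro powr_log_cancel[symmetric]) auto
  also have "\<dots> \<le> 2 ^ m" unfolding pow m by (intro powr_mono) auto
  finally have lower: "44 / \<epsilon> \<le> 2 ^ m" .
  have "(2::real) ^ m < 2 powr (log 2 (44 / \<epsilon>) + 1)"
    unfolding pow m using ceiling_correct[of "log 2 (44 / \<epsilon>)"] by (intro powr_less_mono) auto
  also have "\<dots> = 88 / \<epsilon>" using y \<epsilon> by (simp add: powr_add)
  also have "\<dots> \<le> 2 ^ 6 * (2 / \<epsilon>)" using \<epsilon> by (simp add: field_simps)
  also have "\<dots> \<le> (2 / \<epsilon>) ^ 6 * (2 / \<epsilon>)"
    using \<epsilon> by (intro mult_right_mono power_mono) (auto simp: field_simps)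
  also have "\<dots> = (2 / \<epsilon>) ^ 7"
    by (subst power_Suc2[symmetric]) simp
  finally show ?thesis using lower by auto
qed

lemma net_card_le_exp:
  fixes \<epsilon> :: real
  assumes \<epsilon>: "0 < \<epsilon>" "\<epsilon> < 1" and m: "(2::real) ^ m \<le> (2 / \<epsilon>) ^ 7" and S: "card S \<le> k"
  shows "real (card S * 2 ^ (lam * (m + j))) \<le> exp ((real j + 7) * (real lam * ln (2 / \<epsilon>) + ln (real k + 1)))"
proof -
  have two: "2 \<le> 2 / \<epsilon>" using \<epsilon> by (simp add: field_simps)
  have "(2::real) ^ (m + j) \<le> (2 / \<epsilon>) ^ 7 * (2 / \<epsilon>) ^ j"
    unfolding power_add using m two \<epsilon> by (intro mult_mono power_mono) auto
  then have "((2::real) ^ (m + j)) ^ lam \<le> (((2 / \<epsilon>) ^ (j + 7))) ^ lam"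
    by (intro power_mono) (auto simp: power_add mult.commute)
  also have "\<dots> = exp (ln (2 / \<epsilon>)) ^ ((j + 7) * lam)"
    using \<epsilon> by (simp add: power_mult)
  also have "\<dots> = exp ((real j + 7) * (real lam * ln (2 / \<epsilon>)))"
    unfolding exp_of_nat_mult[symmetric] by (simp add: algebra_simps)
  finally have pow: "(2::real) ^ (lam * (m + j)) \<le> exp ((real j + 7) * (real lam * ln (2 / \<epsilon>)))"
    by (metis power_mult mult.commute)
  have "real (card S) \<le> exp (ln (real k + 1))" using S by simp
  also have "\<dots> \<le> exp ((real j + 7) * ln (real k + 1))"
    using mult_right_mono[of 1 "real j + 7" "ln (real k + 1)"] by (simp only: exp_le_cancel_iff) simp
  finally have "real (card S) * 2 ^ (lam * (m + j))
      \<le> exp ((real j + 7) * ln (real k + 1)) * exp ((real j + 7) * (real lam * ln (2 / \<epsilon>)))"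
    using pow by (intro mult_mono) auto
  then show ?thesis by (simp add: exp_add[symmetric] algebra_simps)
qed

lemma KC_multiscale_nets:
  fixes \<epsilon> :: real
  assumes \<epsilon>: "0 < \<epsilon>" "\<epsilon> < 1" and k: "1 \<le> k"
    and P: "finite P" "P \<subseteq> Rd d" "ddim d P = real lam" "P \<noteq> {}"
  shows "\<exists>N \<rho>. 0 \<le> \<rho> \<and> 22 * \<rho> \<le> \<epsilon> * KC d k P \<and> (\<forall>j. N j \<subseteq> P) \<and>
           (\<forall>j. real (card (N j)) \<le> exp ((real j + 7) * (real lam * ln (2 / \<epsilon>) + ln (real k + 1)))) \<and>
           (\<forall>j. \<forall>x\<in>P. \<exists>y\<in>N j. edist d x y \<le> \<rho> / 2 ^ j)"
proof -
  obtain S where S: "S \<subseteq> P" "card S \<le> k" "\<forall>x\<in>P. \<exists>s\<in>S. edist d x s \<le> KC d k P"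
    using KC_centers[OF P(1,4) k] by blast
  have R: "0 \<le> KC d k P" by (rule KC_nonneg[OF P(1,4) k])
  obtain m where m: "44 / \<epsilon> \<le> 2 ^ m" "(2::real) ^ m \<le> (2 / \<epsilon>) ^ 7"
    using ex_pow2_scale[OF \<epsilon>] by blast
  define \<rho> where "\<rho> = 2 * KC d k P / 2 ^ m"
  have "44 * KC d k P \<le> \<epsilon> * 2 ^ m * KC d k P"
    using m(1) \<epsilon> R by (intro mult_right_mono) (auto simp: field_simps)
  then have \<rho>: "0 \<le> \<rho>" "22 * \<rho> \<le> \<epsilon> * KC d k P"
    using R by (simp_all add: \<rho>_def field_simps)
  have "\<exists>N. N \<subseteq> P \<and> card N \<le> card S * 2 ^ (lam * (m + j)) \<and>
          (\<forall>x\<in>P. \<exists>y\<in>N. edist d x y \<le> \<rho> / 2 ^ j)" for j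
    using doubling_pow2_net[OF doubling_pow2_of_ddim_eq[OF P(1-3)] P(2) finite_subset[OF S(1) P(1)] S(1,3) R,
        of "m + j"]
    by (simp add: \<rho>_def power_add)
  then obtain N where N: "\<And>j. N j \<subseteq> P" "\<And>j. card (N j) \<le> card S * 2 ^ (lam * (m + j))"
      "\<And>j. \<forall>x\<in>P. \<exists>y\<in>N j. edist d x y \<le> \<rho> / 2 ^ j"
    by metis
  have "real (card (N j)) \<le> exp ((real j + 7) * (real lam * ln (2 / \<epsilon>) + ln (real k + 1)))" for j
    using net_card_le_exp[OF \<epsilon> m(2) S(2), of lam j] N(2)[of j] by (meson of_nat_le_iff order_trans)
  with \<rho> N(1,3) show ?thesis by blast
qed

lemma target_dim_bounds:
  fixes \<epsilon> L :: real
  assumes \<epsilon>: "0 < \<epsilon>" "\<epsilon> < 1" and k: "1 \<le> k"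
    and L: "L = real lam * ln (2 / \<epsilon>) + ln (real k + 1)" and t: "t = nat \<lceil>64 / \<epsilon>\<^sup>2 * L\<rceil>"
  shows "ln 2 \<le> L" "64 * L \<le> t * \<epsilon>\<^sup>2" "0 < t"
proof -
  have "0 \<le> real lam * ln (2 / \<epsilon>)" "ln 2 \<le> ln (real k + 1)"
    using \<epsilon> k by (auto simp: field_simps)
  then show L2: "ln 2 \<le> L" unfolding L by linarith
  have "64 / \<epsilon>\<^sup>2 * L \<le> t" unfolding t by linarith
  then show tL: "64 * L \<le> t * \<epsilon>\<^sup>2" using \<epsilon> by (simp add: field_simps)
  have "0 < L" using L2 ln_gt_zero[of 2] by linarith
  with tL \<epsilon> show "0 < t" by (auto intro: ccontr)
qed

lemma gauss_JL_additive_KC_distortion: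
  fixes \<epsilon> :: real and d k lam t :: nat and P :: "(nat \<Rightarrow> real) set"
  assumes \<epsilon>: "0 < \<epsilon>" "\<epsilon> < 1" and k: "1 \<le> k"
    and P: "finite P" "P \<subseteq> Rd d" "ddim d P = real lam"
    and t: "t = nat \<lceil>64 / \<epsilon>\<^sup>2 * (real lam * ln (2 / \<epsilon>) + ln (real k + 1))\<rceil>"
  shows "2 / 3 \<le> measure (gauss_JL t d) {G \<in> space (gauss_JL t d). \<forall>x1\<in>P. \<forall>x2\<in>P.
            (1 - \<epsilon>) * edist d x1 x2 - \<epsilon> * KC d k P \<le> img_dist t d G x1 x2 \<and>
            img_dist t d G x1 x2 \<le> (1 + \<epsilon>) * edist d x1 x2 + \<epsilon> * KC d k P}"
proof -
  note bounds = target_dim_bounds[OF \<epsilon> k refl t]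
  show ?thesis
  proof (cases "P = {}")
    case True
    interpret prob_space "gauss_JL t d" by (rule prob_space_gauss_JL[OF bounds(3)])
    show ?thesis using True by (simp add: prob_space)
  next
    case False
    then obtain N \<rho> where "0 \<le> \<rho>" "22 * \<rho> \<le> \<epsilon> * KC d k P" "\<And>j. N j \<subseteq> P"
        "\<And>j. real (card (N j)) \<le> exp ((real j + 7) * (real lam * ln (2 / \<epsilon>) + ln (real k + 1)))"
        "\<And>j. \<forall>x\<in>P. \<exists>y\<in>N j. edist d x y \<le> \<rho> / 2 ^ j"
      using KC_multiscale_nets[OF \<epsilon> k P] by blast
    moreover obtain M where "\<forall>x\<in>P. \<forall>y\<in>P. edist d x y \<le> \<rho> / 2 ^ M \<longrightarrow> edist d x y = 0"
      using ex_dyadic_scale_below_pos_dists[OF P(1)] by blast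
    ultimately show ?thesis
      using gauss_JL_additive_distortion[OF bounds(3) \<epsilon> P(1)] bounds(1,2) by blast
  qed
qed

theorem mainTheorem10:
  shows "\<exists>C::real > 0. \<forall>(\<epsilon>::real) (d::nat) (k::nat) (lam::nat) (P::(nat \<Rightarrow> real) set).
     0 < \<epsilon> \<longrightarrow> \<epsilon> < 1 \<longrightarrow> 1 \<le> k \<longrightarrow> finite P \<longrightarrow> P \<subseteq> Rd d \<longrightarrow> ddim d P = real lam \<longrightarrow>
     (let t = nat \<lceil>C / \<epsilon>\<^sup>2 * (real lam * ln (2 / \<epsilon>) + ln (real k + 1))\<rceil> in
       measure (gauss_JL t d)
         {G \<in> space (gauss_JL t d). \<forall>x1\<in>P. \<forall>x2\<in>P.
            (1 - \<epsilon>) * edist d x1 x2 - \<epsilon> * KC d k P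
              \<le> edist t (mat_apply t d G x1) (mat_apply t d G x2) \<and>
            edist t (mat_apply t d G x1) (mat_apply t d G x2)
              \<le> (1 + \<epsilon>) * edist d x1 x2 + \<epsilon> * KC d k P} \<ge> 2 / 3)"
proof (intro exI[of _ "64::real"] conjI allI impI)
  fix \<epsilon> :: real and d k lam :: nat and P :: "(nat \<Rightarrow> real) set"
  assume "0 < \<epsilon>" "\<epsilon> < 1" "1 \<le> k" "finite P" "P \<subseteq> Rd d" "ddim d P = real lam"
  then show "let t = nat \<lceil>64 / \<epsilon>\<^sup>2 * (real lam * ln (2 / \<epsilon>) + ln (real k + 1))\<rceil> in
      measure (gauss_JL t d) {G \<in> space (gauss_JL t d). \<forall>x1\<in>P. \<forall>x2\<in>P.
        (1 - \<epsilon>) * edist d x1 x2 - \<epsilon> * KC d k P \<le> img_dist t d G x1 x2 \<and>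
        img_dist t d G x1 x2 \<le> (1 + \<epsilon>) * edist d x1 x2 + \<epsilon> * KC d k P} \<ge> 2 / 3"
    unfolding Let_def by (rule gauss_JL_additive_KC_distortion[OF _ _ _ _ _ _ refl])
qed simp

end
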